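(* Let $N=M=1$ (one input, one output). Suppose the production possibility set $T$ generated by the DMUs' data has $\phi>2$ extreme points $(x^1,y^1),\dots,(x^\phi,y^\phi)$, ordered so that $x^1<\dots<x^\phi$ and $y^1<\dots<y^\phi$. Let DMU $\hat\imath$ have data $(x^{\hat\imath},y^{\hat\imath})$. For $\sigma\ge0$ define the virtual point $v(\sigma)=(x^{\hat\imath}-\sigma,\,y^{\hat\imath}+\sigma)$ and the translated lines: $EF_{k,k+1}(\sigma)$, the straight line through $(x^k+\sigma,y^k-\sigma)$ and $(x^{k+1}+\sigma,y^{k+1}-\sigma)$ for $k=1,\dots,\phi-1$; $EF_1(\sigma)$, the vertical line $x=x^1+\sigma$; and $EF_\phi(\sigma)$, the horizontal line $y=y^\phi-\sigma$. For each such family $L$ let the amount of uncertainty required for $L$ be the least $\sigma\ge0$ with $v(\sigma)\in L(\sigma)$ (infinite if none exists). Then the line of the efficient frontier requiring the minimum amount of uncertainty for DMU $\hat\imath$ is determined as follows: if $y^{\hat\imath}+x^{\hat\imath}\le y^1+x^1$ it is $EF_1$; if $y^k+x^k\le y^{\hat\imath}+x^{\hat\imath}\le y^{k+1}+x^{k+1}$ for some $k\in\{1,\dots,\phi-1\}$ it is $EF_{k,k+1}$; if $y^\phi+x^\phi\le y^{\hat\imath}+x^{\hat\imath}$ it is $EF_\phi$.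
   Context: DEA setting: $I$ DMUs with nonnegative input data $X\in\mathbb{R}^{N\times I}$ and output data $Y\in\mathbb{R}^{M\times I}$ (column $i$ gives $(x^i,y^i)$). The (variable returns to scale) production possibility set is $T=\{(x,y): x\ge X\lambda,\ y\le Y\lambda,\ e^T\lambda=1,\ \lambda\ge0\}$. DMU $\hat\imath$ is the (inefficient) DMU under consideration. Under box uncertainty of size $\sigma$, the favourable realisation moves DMU $\hat\imath$ to $(x^{\hat\imath}-\sigma,y^{\hat\imath}+\sigma)$ and every other DMU $i$ to $(x^i+\sigma,y^i-\sigma)$, so the frontier lines are translated by $(\sigma,-\sigma)$. *)

theory Defs
  imports "HOL-Analysis.Analysis"
begin

text \<open>VRS production possibility set for one input and one output.
  DMUs are indexed by the finite set D; x i is the input, y i the output of DMU i.\<close>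
definition ppsT :: "'i set \<Rightarrow> ('i \<Rightarrow> real) \<Rightarrow> ('i \<Rightarrow> real) \<Rightarrow> (real \<times> real) set" where
  "ppsT D x y = {(a, b). \<exists>l::'i \<Rightarrow> real. (\<forall>i\<in>D. l i \<ge> 0) \<and> (\<Sum>i\<in>D. l i) = 1 \<and>
       a \<ge> (\<Sum>i\<in>D. l i * x i) \<and> b \<le> (\<Sum>i\<in>D. l i * y i)}"

definition vpt :: "real \<Rightarrow> real \<Rightarrow> real \<Rightarrow> real \<times> real" where
  "vpt xh yh \<sigma> = (xh - \<sigma>, yh + \<sigma>)"

definition shiftp :: "real \<Rightarrow> real \<times> real \<Rightarrow> real \<times> real" where
  "shiftp \<sigma> p = (fst p + \<sigma>, snd p - \<sigma>)"

definition EF_seg :: "real \<times> real \<Rightarrow> real \<times> real \<Rightarrow> real \<Rightarrow> (real \<times> real) set" where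
  "EF_seg p q \<sigma> = affine hull {shiftp \<sigma> p, shiftp \<sigma> q}"

definition EF_first :: "real \<times> real \<Rightarrow> real \<Rightarrow> (real \<times> real) set" where
  "EF_first p \<sigma> = {z. fst z = fst p + \<sigma>}"

definition EF_last :: "real \<times> real \<Rightarrow> real \<Rightarrow> (real \<times> real) set" where
  "EF_last p \<sigma> = {z. snd z = snd p - \<sigma>}"

text \<open>Amount of uncertainty required for a line family L: the least sigma \<ge> 0 with
  v(sigma) in L(sigma), infinite if there is none (Inf of the empty set of ereals is \<infinity>).\<close>
definition req_unc :: "real \<Rightarrow> real \<Rightarrow> (real \<Rightarrow> (real \<times> real) set) \<Rightarrow> ereal" where
  "req_unc xh yh L = Inf (ereal ` {\<sigma>. \<sigma> \<ge> 0 \<and> vpt xh yh \<sigma> \<in> L \<sigma>})"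

definition frontier_lines :: "(nat \<Rightarrow> real \<times> real) \<Rightarrow> nat \<Rightarrow> (real \<Rightarrow> (real \<times> real) set) set" where
  "frontier_lines e \<phi> = {EF_first (e 1), EF_last (e \<phi>)} \<union> {EF_seg (e k) (e (Suc k)) | k. 1 \<le> k \<and> k < \<phi>}"

end

theory Submission
  imports Defs
begin

(* Under uncertainty sigma the other DMUs move by (sigma, -sigma) and DMU ih by (-sigma, sigma),
   so they approach each other by 2 sigma along the diagonal direction (-1, 1).  Every frontier
   line is a supporting line  alpha x + beta y = c  of T with alpha < beta, and the uncertainty
   it requires is half the diagonal distance from DMU ih to it,
   (c - alpha x_ih - beta y_ih) / (2 (beta - alpha)).  The diagonal through DMU ih leaves T
   at a point p of the line selected by the case distinction; as p lies in T, it is on the inner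
   side of every other supporting line, which the diagonal therefore reaches no earlier. *)

definition free_disposal :: "(real \<times> real) set \<Rightarrow> bool" where
  "free_disposal T \<longleftrightarrow> (\<forall>p\<in>T. \<forall>q. fst p \<le> fst q \<and> snd q \<le> snd p \<longrightarrow> q \<in> T)"

lemma mem_ppsT_iff:
  "z \<in> ppsT D x y \<longleftrightarrow> (\<exists>l. (\<forall>i\<in>D. 0 \<le> l i) \<and> sum l D = 1 \<and>
     (\<Sum>i\<in>D. l i * x i) \<le> fst z \<and> snd z \<le> (\<Sum>i\<in>D. l i * y i))"
  by (simp add: ppsT_def case_prod_beta)

lemma free_disposal_ppsT: "free_disposal (ppsT D x y)"
proof (unfold free_disposal_def, intro ballI allI impI)
  fix p q assume "p \<in> ppsT D x y" "fst p \<le> fst q \<and> snd q \<le> snd p"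
  then show "q \<in> ppsT D x y"
    unfolding mem_ppsT_iff by (meson order_trans)
qed

lemma data_in_ppsT:
  assumes "finite D" "i \<in> D"
  shows "(x i, y i) \<in> ppsT D x y"
proof -
  define l where "l j = (if j = i then 1 else 0 :: real)" for j
  have "(\<Sum>j\<in>D. l j * f j) = f i" for f :: "'a \<Rightarrow> real"
  proof -
    have "(\<Sum>j\<in>D. l j * f j) = (\<Sum>j\<in>D. if j = i then f j else 0)"
      by (rule sum.cong) (simp_all add: l_def)
    also have "\<dots> = f i"
      using assms by simp
    finally show ?thesis .
  qed
  from this[of "\<lambda>_. 1"] this[of x] this[of y] show ?thesis
    unfolding mem_ppsT_iff by (auto simp: l_def intro!: exI[of _ l])
qed

lemma convex_ppsT: "convex (ppsT D x y)"
  unfolding convex_def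
proof (intro ballI allI impI)
  fix p q :: "real \<times> real" and u v :: real
  assume "p \<in> ppsT D x y" "q \<in> ppsT D x y" and uv: "0 \<le> u" "0 \<le> v" "u + v = 1"
  then obtain l m where
      l: "\<forall>i\<in>D. 0 \<le> l i" "sum l D = 1" "(\<Sum>i\<in>D. l i * x i) \<le> fst p" "snd p \<le> (\<Sum>i\<in>D. l i * y i)"
    and m: "\<forall>i\<in>D. 0 \<le> m i" "sum m D = 1" "(\<Sum>i\<in>D. m i * x i) \<le> fst q" "snd q \<le> (\<Sum>i\<in>D. m i * y i)"
    unfolding mem_ppsT_iff by auto
  define w where "w i = u * l i + v * m i" for i
  have combine: "(\<Sum>i\<in>D. w i * f i) = u * (\<Sum>i\<in>D. l i * f i) + v * (\<Sum>i\<in>D. m i * f i)" for f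
    by (simp add: w_def sum.distrib sum_distrib_left algebra_simps)
  have "\<forall>i\<in>D. 0 \<le> w i" "sum w D = 1"
    using combine[of "\<lambda>_. 1"] l m uv by (simp_all add: w_def)
  moreover have "(\<Sum>i\<in>D. w i * x i) \<le> u * fst p + v * fst q"
    "u * snd p + v * snd q \<le> (\<Sum>i\<in>D. w i * y i)"
    unfolding combine using l m uv by (simp_all add: add_mono mult_left_mono)
  ultimately show "u *\<^sub>R p + v *\<^sub>R q \<in> ppsT D x y"
    unfolding mem_ppsT_iff by auto
qed

lemma ppsT_weights:
  assumes "p \<in> ppsT D x y" "\<alpha> \<le> 0" "0 \<le> \<beta>"
  obtains l where "\<forall>i\<in>D. 0 \<le> l i" "sum l D = 1"
    "(\<Sum>i\<in>D. l i * x i) \<le> fst p" "snd p \<le> (\<Sum>i\<in>D. l i * y i)"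
    "\<alpha> * fst p + \<beta> * snd p \<le> (\<Sum>i\<in>D. l i * (\<alpha> * x i + \<beta> * y i))"
proof -
  obtain l where l: "\<forall>i\<in>D. 0 \<le> l i" "sum l D = 1"
    "(\<Sum>i\<in>D. l i * x i) \<le> fst p" "snd p \<le> (\<Sum>i\<in>D. l i * y i)"
    using assms(1) unfolding mem_ppsT_iff by auto
  have "\<alpha> * fst p + \<beta> * snd p \<le> \<alpha> * (\<Sum>i\<in>D. l i * x i) + \<beta> * (\<Sum>i\<in>D. l i * y i)"
    using l(3,4) assms(2,3) by (intro add_mono mult_left_mono_neg mult_left_mono)
  also have "\<dots> = (\<Sum>i\<in>D. l i * (\<alpha> * x i + \<beta> * y i))"
    by (simp add: sum_distrib_left sum.distrib algebra_simps)
  finally show ?thesis using l that by blast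
qed

lemma ppsT_linear_le:
  assumes "finite D" "\<alpha> \<le> 0" "0 \<le> \<beta>" "\<forall>i\<in>D. \<alpha> * x i + \<beta> * y i \<le> H" "p \<in> ppsT D x y"
  shows "\<alpha> * fst p + \<beta> * snd p \<le> H"
proof -
  obtain l where l: "\<forall>i\<in>D. 0 \<le> l i" "sum l D = 1"
    and le: "\<alpha> * fst p + \<beta> * snd p \<le> (\<Sum>i\<in>D. l i * (\<alpha> * x i + \<beta> * y i))"
    using ppsT_weights[OF assms(5,2,3)] by blast
  note le
  also have "\<dots> \<le> (\<Sum>i\<in>D. l i * H)"
    using l(1) assms(4) by (intro sum_mono mult_left_mono) auto
  also have "\<dots> = H"
    using l(2) by (simp add: sum_distrib_right[symmetric])
  finally show ?thesis .
qed

lemma ppsT_linear_max_imp_ppsT_argmax: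
  assumes "finite D" "\<alpha> \<le> 0" "0 \<le> \<beta>" "\<forall>i\<in>D. \<alpha> * x i + \<beta> * y i \<le> H"
    and "p \<in> ppsT D x y" "H \<le> \<alpha> * fst p + \<beta> * snd p"
  shows "p \<in> ppsT {i\<in>D. \<alpha> * x i + \<beta> * y i = H} x y"
proof -
  define h where "h i = \<alpha> * x i + \<beta> * y i" for i
  obtain l where l: "\<forall>i\<in>D. 0 \<le> l i" "sum l D = 1"
    "(\<Sum>i\<in>D. l i * x i) \<le> fst p" "snd p \<le> (\<Sum>i\<in>D. l i * y i)"
    and "\<alpha> * fst p + \<beta> * snd p \<le> (\<Sum>i\<in>D. l i * h i)"
    using ppsT_weights[OF assms(5,2,3)] unfolding h_def by blast
  with assms(6) have "(\<Sum>i\<in>D. l i * (H - h i)) \<le> 0"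
    using l(2) by (simp add: right_diff_distrib sum_subtractf sum_distrib_right[symmetric])
  moreover have nonneg: "\<forall>i\<in>D. 0 \<le> l i * (H - h i)"
    using l(1) assms(4) by (simp add: h_def)
  ultimately have "\<forall>i\<in>D. l i * (H - h i) = 0"
    using sum_nonneg_eq_0_iff[OF assms(1)] sum_nonneg[of D] by (metis (no_types, lifting) order_antisym)
  then have vanish: "\<forall>i\<in>D - {i\<in>D. h i = H}. l i = 0"
    by auto
  have restrict: "(\<Sum>i\<in>{i\<in>D. h i = H}. l i * f i) = (\<Sum>i\<in>D. l i * f i)" for f
    using vanish by (intro sum.mono_neutral_left assms(1)) auto
  show ?thesis
    using restrict[of "\<lambda>_. 1"] restrict[of x] restrict[of y] l
    unfolding mem_ppsT_iff h_def by (auto intro!: exI[of _ l])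
qed

lemma inner_Pair_fst_snd: "(a, b) \<bullet> z = a * fst z + b * snd z"
  for a b :: real and z :: "real \<times> real"
  by (cases z) simp

(* The maximiser is the lexicographically best DMU: maximal value of the functional, then
   minimal input, then maximal output.  The three tie-breaks cut out a chain of faces
   ending in a single point. *)
lemma ppsT_max_at_extreme_point:
  fixes \<alpha> \<beta> :: real
  assumes "finite D" "D \<noteq> {}" "\<alpha> \<le> 0" "0 \<le> \<beta>"
  obtains q where "q extreme_point_of ppsT D x y"
    "\<forall>p\<in>ppsT D x y. \<alpha> * fst p + \<beta> * snd p \<le> \<alpha> * fst q + \<beta> * snd q"
proof -
  define H where "H = Max ((\<lambda>i. \<alpha> * x i + \<beta> * y i) ` D)"
  define M where "M = {i\<in>D. \<alpha> * x i + \<beta> * y i = H}"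
  define m where "m = Min (x ` M)"
  define M' where "M' = {i\<in>M. x i = m}"
  define Y where "Y = Max (y ` M')"
  have H: "\<forall>i\<in>D. \<alpha> * x i + \<beta> * y i \<le> H"
    using assms(1) by (simp add: H_def)
  have "H \<in> (\<lambda>i. \<alpha> * x i + \<beta> * y i) ` D"
    unfolding H_def using assms(1,2) by (intro Max_in) auto
  then have "finite M" "M \<noteq> {}"
    using assms(1) by (auto simp: M_def)
  then have m: "\<forall>i\<in>M. - x i \<le> - m" and "m \<in> x ` M"
    by (simp_all add: m_def)
  then have "finite M'" "M' \<noteq> {}"
    using \<open>finite M\<close> by (auto simp: M'_def)
  then have Y: "\<forall>i\<in>M'. y i \<le> Y" and "Y \<in> y ` M'"
    by (simp_all add: Y_def)
  then obtain i0 where i0: "i0 \<in> M'" "y i0 = Y"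
    by auto
  define F1 where "F1 = ppsT D x y \<inter> {z. (\<alpha>, \<beta>) \<bullet> z = H}"
  define F2 where "F2 = F1 \<inter> {z. (-1, 0) \<bullet> z = - m}"
  define F3 where "F3 = F2 \<inter> {z. (0, 1) \<bullet> z = Y}"
  have below_H: "\<forall>p\<in>ppsT D x y. \<alpha> * fst p + \<beta> * snd p \<le> H"
    using ppsT_linear_le[OF assms(1,3,4) H] by blast
  have F1_sub: "F1 \<subseteq> ppsT M x y"
    using ppsT_linear_max_imp_ppsT_argmax[OF assms(1,3,4) H]
    by (auto simp: F1_def M_def inner_Pair_fst_snd)
  have F2_sub: "F2 \<subseteq> ppsT M' x y"
  proof
    fix z assume "z \<in> F2"
    then have "z \<in> ppsT {i\<in>M. -1 * x i + 0 * y i = - m} x y"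
      using F1_sub m \<open>finite M\<close>
      by (intro ppsT_linear_max_imp_ppsT_argmax) (auto simp: F2_def inner_Pair_fst_snd)
    then show "z \<in> ppsT M' x y"
      by (simp add: M'_def)
  qed
  have "F1 face_of ppsT D x y"
    unfolding F1_def using below_H
    by (intro face_of_Int_supporting_hyperplane_le convex_ppsT) (simp add: inner_Pair_fst_snd)
  moreover have "F2 face_of F1"
  proof -
    have "-1 * fst z + 0 * snd z \<le> - m" if "z \<in> F1" for z
      using ppsT_linear_le[OF \<open>finite M\<close>, of "-1" 0 x y "- m" z] F1_sub m that by auto
    then show ?thesis
      unfolding F2_def
      by (intro face_of_Int_supporting_hyperplane_le face_of_imp_convex[OF \<open>F1 face_of _\<close>])
        (simp add: inner_Pair_fst_snd)
  qed
  moreover have "F3 face_of F2"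
  proof -
    have "0 * fst z + 1 * snd z \<le> Y" if "z \<in> F2" for z
      using ppsT_linear_le[OF \<open>finite M'\<close>, of 0 1 x y Y z] F2_sub Y that by auto
    then show ?thesis
      unfolding F3_def
      by (intro face_of_Int_supporting_hyperplane_le face_of_imp_convex[OF \<open>F2 face_of _\<close>])
        (simp add: inner_Pair_fst_snd)
  qed
  moreover have "F3 = {(m, Y)}"
  proof -
    have "(x i0, y i0) \<in> F3"
      using data_in_ppsT[OF assms(1)] i0 by (auto simp: F3_def F2_def F1_def M'_def M_def inner_Pair_fst_snd)
    moreover have "(x i0, y i0) = (m, Y)"
      using i0 by (simp add: M'_def)
    ultimately show ?thesis
      by (auto simp: F3_def F2_def inner_Pair_fst_snd prod_eq_iff)
  qed
  ultimately have "(m, Y) extreme_point_of ppsT D x y"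
    by (metis face_of_singleton face_of_trans)
  moreover have "\<alpha> * m + \<beta> * Y = H"
    using \<open>F3 = {(m, Y)}\<close> by (auto simp: F3_def F2_def F1_def inner_Pair_fst_snd)
  ultimately show thesis
    using that below_H by auto
qed

lemma extreme_point_undominated:
  assumes "free_disposal T" "p extreme_point_of T" "q \<in> T" "fst q \<le> fst p" "snd p \<le> snd q"
  shows "q = p"
proof (rule ccontr)
  assume "q \<noteq> p"
  define r where "r = (2 * fst p - fst q, 2 * snd p - snd q)"
  have "p \<in> T"
    using assms(2) by (simp add: extreme_point_of_def)
  then have "r \<in> T"
    using assms(1,4,5) unfolding free_disposal_def r_def by force
  moreover have "p = midpoint q r" "q \<noteq> r"
    using \<open>q \<noteq> p\<close> by (auto simp: r_def midpoint_def prod_eq_iff)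
  then have "p \<in> open_segment q r"
    by simp
  ultimately show False
    using assms(2,3) by (auto simp: extreme_point_of_def)
qed

lemma extreme_point_above_chord:
  assumes "convex T" "free_disposal T" "p extreme_point_of T" "u \<in> T" "v \<in> T"
    and "fst u \<le> fst p" "fst p \<le> fst v"
  shows "(fst v - fst p) * snd u + (fst p - fst u) * snd v \<le> (fst v - fst u) * snd p"
proof (cases "fst u = fst v")
  case True
  then show ?thesis
    using assms(6,7) by simp
next
  case False
  then have uv: "fst u < fst v"
    using assms(6,7) by simp
  define t where "t = (fst p - fst u) / (fst v - fst u)"
  define w where "w = (1 - t) *\<^sub>R u + t *\<^sub>R v"
  have "0 \<le> t" "t \<le> 1"
    using uv assms(6,7) by (simp_all add: t_def)
  then have "w \<in> T"
    unfolding w_def using assms(1,4,5) by (intro convexD) auto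
  have t_scaled: "t * (fst v - fst u) = fst p - fst u"
    using uv by (simp add: t_def)
  have "fst w = fst u + t * (fst v - fst u)"
    by (simp add: w_def algebra_simps)
  then have "fst w = fst p"
    using t_scaled by simp
  have "snd w \<le> snd p"
  proof (rule ccontr)
    assume "\<not> snd w \<le> snd p"
    then show False
      using extreme_point_undominated[OF assms(2,3) \<open>w \<in> T\<close>] \<open>fst w = fst p\<close> by force
  qed
  then have "(fst v - fst u) * snd w \<le> (fst v - fst u) * snd p"
    using uv by simp
  moreover have "(fst v - fst u) * snd w = (fst v - fst u) * snd u + t * (fst v - fst u) * (snd v - snd u)"
    by (simp add: w_def algebra_simps)
  then have "(fst v - fst u) * snd w = (fst v - fst p) * snd u + (fst p - fst u) * snd v"
    unfolding t_scaled by (simp add: algebra_simps)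
  ultimately show ?thesis
    by simp
qed

lemma less_along_chain:
  fixes f :: "nat \<Rightarrow> 'a::order"
  assumes "\<forall>k. 1 \<le> k \<and> k < n \<longrightarrow> f k < f (Suc k)" "1 \<le> i" "i < j" "j \<le> n"
  shows "f i < f j"
  using assms(3,4)
proof (induction j)
  case (Suc j)
  show ?case
  proof (cases "i = j")
    case True
    then show ?thesis
      using assms(1,2) Suc.prems by auto
  next
    case False
    then have "f i < f j"
      using Suc by simp
    also have "f j < f (Suc j)"
      using assms(1,2) Suc.prems False by auto
    finally show ?thesis .
  qed
qed simp

definition shifted_line :: "real \<Rightarrow> real \<Rightarrow> real \<Rightarrow> real \<Rightarrow> (real \<times> real) set" where
  "shifted_line \<alpha> \<beta> c \<sigma> = {z. \<alpha> * (fst z - \<sigma>) + \<beta> * (snd z + \<sigma>) = c}"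

lemma EF_first_eq_shifted_line: "EF_first p = shifted_line (-1) 0 (- fst p)"
  by (auto simp: EF_first_def shifted_line_def)

lemma EF_last_eq_shifted_line: "EF_last p = shifted_line 0 1 (snd p)"
  by (auto simp: EF_last_def shifted_line_def)

lemma EF_seg_eq_shifted_line:
  assumes "fst p < fst q"
  shows "EF_seg p q = shifted_line (snd p - snd q) (fst q - fst p)
           ((fst q - fst p) * snd p - (snd q - snd p) * fst p)"
    (is "_ = shifted_line ?\<alpha> ?\<beta> ?c")
proof (rule ext, rule set_eqI)
  fix \<sigma> :: real and z :: "real \<times> real"
  have "z \<in> EF_seg p q \<sigma> \<longleftrightarrow> (\<exists>t. z = shiftp \<sigma> p + t *\<^sub>R (shiftp \<sigma> q - shiftp \<sigma> p))"
    by (simp add: EF_seg_def affine_hull_2_alt image_iff eq_commute)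
  also have "\<dots> \<longleftrightarrow> z \<in> shifted_line ?\<alpha> ?\<beta> ?c \<sigma>"
  proof
    assume "\<exists>t. z = shiftp \<sigma> p + t *\<^sub>R (shiftp \<sigma> q - shiftp \<sigma> p)"
    then show "z \<in> shifted_line ?\<alpha> ?\<beta> ?c \<sigma>"
      by (auto simp: shifted_line_def shiftp_def algebra_simps)
  next
    assume z: "z \<in> shifted_line ?\<alpha> ?\<beta> ?c \<sigma>"
    define t where "t = (fst z - \<sigma> - fst p) / (fst q - fst p)"
    have "z = shiftp \<sigma> p + t *\<^sub>R (shiftp \<sigma> q - shiftp \<sigma> p)"
      using z assms by (simp add: prod_eq_iff shiftp_def shifted_line_def t_def field_simps)
    then show "\<exists>t. z = shiftp \<sigma> p + t *\<^sub>R (shiftp \<sigma> q - shiftp \<sigma> p)" ..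
  qed
  finally show "z \<in> EF_seg p q \<sigma> \<longleftrightarrow> z \<in> shifted_line ?\<alpha> ?\<beta> ?c \<sigma>" .
qed

lemma req_unc_shifted_line:
  assumes "\<alpha> < \<beta>" "\<alpha> * a + \<beta> * b \<le> c"
  shows "req_unc a b (shifted_line \<alpha> \<beta> c) = ereal ((c - \<alpha> * a - \<beta> * b) / (2 * (\<beta> - \<alpha>)))"
proof -
  let ?s = "(c - \<alpha> * a - \<beta> * b) / (2 * (\<beta> - \<alpha>))"
  have "vpt a b \<sigma> \<in> shifted_line \<alpha> \<beta> c \<sigma> \<longleftrightarrow> \<sigma> = ?s" for \<sigma>
    using assms(1) by (auto simp: vpt_def shifted_line_def field_simps)
  moreover have "0 \<le> ?s"
    using assms by simp
  ultimately have "{\<sigma>. 0 \<le> \<sigma> \<and> vpt a b \<sigma> \<in> shifted_line \<alpha> \<beta> c \<sigma>} = {?s}"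
    by auto
  then show ?thesis
    by (simp add: req_unc_def)
qed

(* alpha < beta: the level alpha x + beta y grows along the direction (-1, 1) in which
   DMU ih approaches the translated frontier. *)
definition supporting_line_family :: "(real \<times> real) set \<Rightarrow> (real \<Rightarrow> (real \<times> real) set) \<Rightarrow> bool" where
  "supporting_line_family T L \<longleftrightarrow>
     (\<exists>\<alpha> \<beta> c. \<alpha> < \<beta> \<and> L = shifted_line \<alpha> \<beta> c \<and> (\<forall>z\<in>T. \<alpha> * fst z + \<beta> * snd z \<le> c))"

lemma req_unc_le_if_frontier_point:
  assumes "supporting_line_family T L0" "supporting_line_family T L"
    and "(a, b) \<in> T" "p \<in> T" "p \<in> L0 0" "fst p + snd p = a + b"
  shows "req_unc a b L0 \<le> req_unc a b L"
proof -
  obtain \<alpha> \<beta> c where L0: "\<alpha> < \<beta>" "L0 = shifted_line \<alpha> \<beta> c" "\<forall>z\<in>T. \<alpha> * fst z + \<beta> * snd z \<le> c"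
    using assms(1) by (auto simp: supporting_line_family_def)
  obtain \<alpha>' \<beta>' c' where L: "\<alpha>' < \<beta>'" "L = shifted_line \<alpha>' \<beta>' c'" "\<forall>z\<in>T. \<alpha>' * fst z + \<beta>' * snd z \<le> c'"
    using assms(2) by (auto simp: supporting_line_family_def)
  define s where "s = (a - fst p) / 2"
  have "2 * s = a - fst p"
    by (simp add: s_def)
  then have p: "fst p = a - 2 * s" "snd p = b + 2 * s"
    using assms(6) by linarith+
  have "\<alpha> * (a - 2 * s) + \<beta> * (b + 2 * s) = c"
    using assms(5) L0(2) p by (simp add: shifted_line_def)
  then have "(c - \<alpha> * a - \<beta> * b) / (2 * (\<beta> - \<alpha>)) = s"
    using L0(1) by (simp add: field_simps)
  moreover have "\<alpha>' * (a - 2 * s) + \<beta>' * (b + 2 * s) \<le> c'"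
    using L(3) assms(4) p by force
  then have "s \<le> (c' - \<alpha>' * a - \<beta>' * b) / (2 * (\<beta>' - \<alpha>'))"
    using L(1) by (simp add: field_simps)
  moreover have "\<alpha> * a + \<beta> * b \<le> c" "\<alpha>' * a + \<beta>' * b \<le> c'"
    using L0(3) L(3) assms(3) by force+
  ultimately show ?thesis
    using req_unc_shifted_line L0(1,2) L(1,2) by simp
qed

locale ordered_extreme_points =
  fixes D :: "'i set" and x y :: "'i \<Rightarrow> real" and e :: "nat \<Rightarrow> real \<times> real" and \<phi> :: nat
  assumes finite_D: "finite D" and nonempty_D: "D \<noteq> {}"
    and extreme_points_eq: "{p. p extreme_point_of ppsT D x y} = e ` {1..\<phi>}"
    and increasing: "\<forall>k. 1 \<le> k \<and> k < \<phi> \<longrightarrow> fst (e k) < fst (e (Suc k)) \<and> snd (e k) < snd (e (Suc k))"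
begin

lemma extreme_point_e: "j \<in> {1..\<phi>} \<Longrightarrow> e j extreme_point_of ppsT D x y"
  using extreme_points_eq by blast

lemma e_in_ppsT: "j \<in> {1..\<phi>} \<Longrightarrow> e j \<in> ppsT D x y"
  using extreme_point_e by (simp add: extreme_point_of_def)

lemma fst_e_less: "1 \<le> i \<Longrightarrow> i < j \<Longrightarrow> j \<le> \<phi> \<Longrightarrow> fst (e i) < fst (e j)"
  using less_along_chain[of \<phi> "\<lambda>k. fst (e k)"] increasing by blast

lemma snd_e_less: "1 \<le> i \<Longrightarrow> i < j \<Longrightarrow> j \<le> \<phi> \<Longrightarrow> snd (e i) < snd (e j)"
  using less_along_chain[of \<phi> "\<lambda>k. snd (e k)"] increasing by blast

lemma ppsT_max_at_some_e:
  assumes "\<alpha> \<le> 0" "0 \<le> \<beta>"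
  obtains j where "j \<in> {1..\<phi>}"
    "\<forall>p\<in>ppsT D x y. \<alpha> * fst p + \<beta> * snd p \<le> \<alpha> * fst (e j) + \<beta> * snd (e j)"
proof -
  obtain q where "q extreme_point_of ppsT D x y"
    "\<forall>p\<in>ppsT D x y. \<alpha> * fst p + \<beta> * snd p \<le> \<alpha> * fst q + \<beta> * snd q"
    using ppsT_max_at_extreme_point[OF finite_D nonempty_D assms] .
  moreover from this(1) obtain j where "j \<in> {1..\<phi>}" "q = e j"
    using extreme_points_eq by blast
  ultimately show thesis
    using that by blast
qed

lemma ppsT_right_of_first:
  assumes "p \<in> ppsT D x y"
  shows "fst (e 1) \<le> fst p"
proof -
  obtain j where "j \<in> {1..\<phi>}" "\<forall>p\<in>ppsT D x y. -1 * fst p + 0 * snd p \<le> -1 * fst (e j) + 0 * snd (e j)"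
    using ppsT_max_at_some_e[of "-1" 0] by auto
  moreover have "fst (e 1) \<le> fst (e j)"
    using fst_e_less[of 1 j] \<open>j \<in> {1..\<phi>}\<close> by (cases "j = 1") auto
  ultimately show ?thesis
    using assms by force
qed

lemma ppsT_below_last:
  assumes "p \<in> ppsT D x y"
  shows "snd p \<le> snd (e \<phi>)"
proof -
  obtain j where "j \<in> {1..\<phi>}" "\<forall>p\<in>ppsT D x y. 0 * fst p + 1 * snd p \<le> 0 * fst (e j) + 1 * snd (e j)"
    using ppsT_max_at_some_e[of 0 1] by auto
  moreover have "snd (e j) \<le> snd (e \<phi>)"
    using snd_e_less[of j \<phi>] \<open>j \<in> {1..\<phi>}\<close> by (cases "j = \<phi>") auto
  ultimately show ?thesis
    using assms by force
qed

lemma ppsT_below_segment: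
  assumes "1 \<le> k" "k < \<phi>" "p \<in> ppsT D x y"
  shows "(fst (e (Suc k)) - fst (e k)) * snd p - (snd (e (Suc k)) - snd (e k)) * fst p
       \<le> (fst (e (Suc k)) - fst (e k)) * snd (e k) - (snd (e (Suc k)) - snd (e k)) * fst (e k)"
proof -
  define h where "h z = (fst (e (Suc k)) - fst (e k)) * snd z - (snd (e (Suc k)) - snd (e k)) * fst z"
    for z :: "real \<times> real"
  have chord: "(fst w - fst v) * snd u + (fst v - fst u) * snd w \<le> (fst w - fst u) * snd v"
    if "i \<in> {1..\<phi>}" "u \<in> ppsT D x y" "w \<in> ppsT D x y" "fst u \<le> fst (e i)" "fst (e i) \<le> fst w" "v = e i"
    for i u v w
    using extreme_point_above_chord[OF convex_ppsT free_disposal_ppsT extreme_point_e] that by blast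
  obtain j where j: "j \<in> {1..\<phi>}" and max: "\<forall>p\<in>ppsT D x y. h p \<le> h (e j)"
    using ppsT_max_at_some_e[of "snd (e k) - snd (e (Suc k))" "fst (e (Suc k)) - fst (e k)"]
      fst_e_less[of k "Suc k"] snd_e_less[of k "Suc k"] assms(1,2)
    by (auto simp: h_def algebra_simps)
  have "h (e j) \<le> h (e k)"
  proof -
    (* For j < k (resp. j > Suc k) this is the chord inequality at e k (resp. e (Suc k)). *)
    consider "j < k" | "j = k" | "j = Suc k" | "Suc k < j"
      by linarith
    then show ?thesis
    proof cases
      case 1
      then have "fst (e j) \<le> fst (e k)" "fst (e k) \<le> fst (e (Suc k))"
        using fst_e_less[of j k] fst_e_less[of k "Suc k"] j assms(1,2) by auto
      then have "(fst (e (Suc k)) - fst (e k)) * snd (e j) + (fst (e k) - fst (e j)) * snd (e (Suc k))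
            \<le> (fst (e (Suc k)) - fst (e j)) * snd (e k)"
        using chord[of k "e j" "e (Suc k)" "e k"] e_in_ppsT[of j] e_in_ppsT[of "Suc k"] j assms(1,2)
        by simp
      then show ?thesis
        by (simp add: h_def algebra_simps)
    next
      case 4
      then have "fst (e k) \<le> fst (e (Suc k))" "fst (e (Suc k)) \<le> fst (e j)"
        using fst_e_less[of k "Suc k"] fst_e_less[of "Suc k" j] j assms(1,2) by auto
      then have "(fst (e j) - fst (e (Suc k))) * snd (e k) + (fst (e (Suc k)) - fst (e k)) * snd (e j)
            \<le> (fst (e j) - fst (e k)) * snd (e (Suc k))"
        using chord[of "Suc k" "e k" "e j" "e (Suc k)"] e_in_ppsT[of j] e_in_ppsT[of k] j assms(1,2)
        by simp
      then show ?thesis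
        by (simp add: h_def algebra_simps)
    qed (simp_all add: h_def algebra_simps)
  qed
  then show ?thesis
    using max assms(3) by (force simp: h_def)
qed

lemma supporting_frontier_lines:
  assumes "L \<in> frontier_lines e \<phi>"
  shows "supporting_line_family (ppsT D x y) L"
  using assms unfolding frontier_lines_def
proof (elim UnE insertE emptyE CollectE exE conjE)
  assume "L = EF_first (e 1)"
  then show ?thesis
    using ppsT_right_of_first unfolding supporting_line_family_def EF_first_eq_shifted_line
    by (intro exI[of _ "-1"] exI[of _ 0] exI[of _ "- fst (e 1)"]) auto
next
  assume "L = EF_last (e \<phi>)"
  then show ?thesis
    using ppsT_below_last unfolding supporting_line_family_def EF_last_eq_shifted_line
    by (intro exI[of _ 0] exI[of _ 1] exI[of _ "snd (e \<phi>)"]) auto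
next
  fix k assume k: "L = EF_seg (e k) (e (Suc k))" "1 \<le> k" "k < \<phi>"
  define dx where "dx = fst (e (Suc k)) - fst (e k)"
  define dy where "dy = snd (e (Suc k)) - snd (e k)"
  have "L = shifted_line (- dy) dx (dx * snd (e k) - dy * fst (e k))"
    using k EF_seg_eq_shifted_line fst_e_less[of k "Suc k"] by (simp add: dx_def dy_def)
  moreover have "- dy < dx"
    using k fst_e_less[of k "Suc k"] snd_e_less[of k "Suc k"] by (simp add: dx_def dy_def)
  moreover have "- dy * fst z + dx * snd z \<le> dx * snd (e k) - dy * fst (e k)" if "z \<in> ppsT D x y" for z
    using ppsT_below_segment[OF k(2,3) that] by (simp add: dx_def dy_def algebra_simps)
  ultimately show ?thesis
    unfolding supporting_line_family_def by blast
qed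

lemma segment_point_with_coordinate_sum:
  assumes "1 \<le> k" "k < \<phi>" "snd (e k) + fst (e k) \<le> s" "s \<le> snd (e (Suc k)) + fst (e (Suc k))"
  obtains p where "p \<in> ppsT D x y" "p \<in> EF_seg (e k) (e (Suc k)) 0" "fst p + snd p = s"
proof -
  have "\<exists>p\<in>closed_segment (e k) (e (Suc k)). (1, 1) \<bullet> p = s"
    using assms(3,4)
    by (intro connected_ivt_hyperplane[of _ "e k" "e (Suc k)"]) (auto simp: inner_Pair_fst_snd)
  then obtain p where p: "p \<in> closed_segment (e k) (e (Suc k))" "fst p + snd p = s"
    by (auto simp: inner_Pair_fst_snd)
  have "p \<in> ppsT D x y"
    using p(1) closed_segment_subset[OF e_in_ppsT[of k] e_in_ppsT[of "Suc k"] convex_ppsT] assms(1,2)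
    by auto
  moreover have "p \<in> EF_seg (e k) (e (Suc k)) 0"
    using p(1) segment_convex_hull convex_hull_subset_affine_hull
    by (fastforce simp: EF_seg_def shiftp_def)
  ultimately show thesis
    using that p(2) by blast
qed

lemma frontier_line_minimal:
  assumes "L0 \<in> frontier_lines e \<phi>" "i \<in> D"
    and "p \<in> ppsT D x y" "p \<in> L0 0" "fst p + snd p = x i + y i"
  shows "\<forall>L\<in>frontier_lines e \<phi>. req_unc (x i) (y i) L0 \<le> req_unc (x i) (y i) L"
  using req_unc_le_if_frontier_point[OF supporting_frontier_lines[OF assms(1)]
      supporting_frontier_lines data_in_ppsT[OF finite_D assms(2)] assms(3-5)]
  by blast

end

theorem theorem5:
  fixes D :: "'i set" and x y :: "'i \<Rightarrow> real" and ih :: 'i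
    and e :: "nat \<Rightarrow> real \<times> real" and \<phi> :: nat
  assumes "finite D"
    and "\<forall>i\<in>D. x i \<ge> 0 \<and> y i \<ge> 0"
    and "ih \<in> D"
    and "\<phi> > 2"
    and "{p. p extreme_point_of ppsT D x y} = e ` {1..\<phi>}"
    and "\<forall>k. 1 \<le> k \<and> k < \<phi> \<longrightarrow> fst (e k) < fst (e (Suc k)) \<and> snd (e k) < snd (e (Suc k))"
  shows
    "(y ih + x ih \<le> snd (e 1) + fst (e 1) \<longrightarrow>
        (\<forall>L\<in>frontier_lines e \<phi>. req_unc (x ih) (y ih) (EF_first (e 1)) \<le> req_unc (x ih) (y ih) L))
   \<and> (\<forall>k. 1 \<le> k \<and> k < \<phi> \<and> snd (e k) + fst (e k) \<le> y ih + x ih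
            \<and> y ih + x ih \<le> snd (e (Suc k)) + fst (e (Suc k)) \<longrightarrow>
        (\<forall>L\<in>frontier_lines e \<phi>. req_unc (x ih) (y ih) (EF_seg (e k) (e (Suc k))) \<le> req_unc (x ih) (y ih) L))
   \<and> (snd (e \<phi>) + fst (e \<phi>) \<le> y ih + x ih \<longrightarrow>
        (\<forall>L\<in>frontier_lines e \<phi>. req_unc (x ih) (y ih) (EF_last (e \<phi>)) \<le> req_unc (x ih) (y ih) L))"
proof -
  interpret ordered_extreme_points D x y e \<phi>
    using assms(1,3,5,6) by unfold_locales auto
  have ends: "1 \<in> {1..\<phi>}" "\<phi> \<in> {1..\<phi>}"
    using assms(4) by auto
  have first: "\<forall>L\<in>frontier_lines e \<phi>. req_unc (x ih) (y ih) (EF_first (e 1)) \<le> req_unc (x ih) (y ih) L"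
    if "y ih + x ih \<le> snd (e 1) + fst (e 1)"
    using e_in_ppsT[OF ends(1)] free_disposal_ppsT that
    by (intro frontier_line_minimal[OF _ assms(3), of _ "(fst (e 1), y ih + x ih - fst (e 1))"])
      (force simp: frontier_lines_def EF_first_def free_disposal_def)+
  have last: "\<forall>L\<in>frontier_lines e \<phi>. req_unc (x ih) (y ih) (EF_last (e \<phi>)) \<le> req_unc (x ih) (y ih) L"
    if "snd (e \<phi>) + fst (e \<phi>) \<le> y ih + x ih"
    using e_in_ppsT[OF ends(2)] free_disposal_ppsT that
    by (intro frontier_line_minimal[OF _ assms(3), of _ "(y ih + x ih - snd (e \<phi>), snd (e \<phi>))"])
      (force simp: frontier_lines_def EF_last_def free_disposal_def)+
  have segment: "\<forall>L\<in>frontier_lines e \<phi>.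
      req_unc (x ih) (y ih) (EF_seg (e k) (e (Suc k))) \<le> req_unc (x ih) (y ih) L"
    if k: "1 \<le> k" "k < \<phi>" and sums: "snd (e k) + fst (e k) \<le> y ih + x ih"
      "y ih + x ih \<le> snd (e (Suc k)) + fst (e (Suc k))" for k
  proof -
    obtain p where "p \<in> ppsT D x y" "p \<in> EF_seg (e k) (e (Suc k)) 0" "fst p + snd p = x ih + y ih"
      using segment_point_with_coordinate_sum[OF k sums] by (metis add.commute)
    moreover have "EF_seg (e k) (e (Suc k)) \<in> frontier_lines e \<phi>"
      using k by (auto simp: frontier_lines_def)
    ultimately show ?thesis
      using frontier_line_minimal[OF _ assms(3)] by blast
  qed
  show ?thesis
    using first last segment by blast
qed

end
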